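(* If $f, g : X \to \mathbb{R}$ are limsup functions, then $f+g$, $\min(f,g)$ and $\max(f,g)$ are limsup functions.
   Context: Let $A$ be a non-empty countable set and $T$ a pruned tree on $A$ (a set of finite sequences of elements of $A$, closed under initial segments, in which every sequence has a proper extension in $T$). Let $X$ be the set of infinite branches of $T$, with the topology generated by the cylinder sets $O(s) = \{x \in X : s \text{ is an initial segment of } x\}$, $s \in T$. A function $f : X \to \mathbb{R}$ is a limsup function if there exists $u : T \to \mathbb{R}$ with $f(x) = \limsup_{t\to\infty} u(x_0,\dots,x_t)$ for every $x \in X$. *)

theory Defs
  imports "HOL-Analysis.Analysis" "HOL-Library.Liminf_Limsup"
begin

definition pruned_tree :: "'a set \<Rightarrow> 'a list set \<Rightarrow> bool" where
  "pruned_tree A T \<longleftrightarrow>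
     T \<subseteq> lists A
   \<and> (\<forall>s\<in>T. \<forall>n. take n s \<in> T)
   \<and> (\<forall>s\<in>T. \<exists>t\<in>T. length s < length t \<and> take (length s) t = s)"

definition branches :: "'a list set \<Rightarrow> (nat \<Rightarrow> 'a) set" where
  "branches T = {x. \<forall>n. map x [0..<n] \<in> T}"

definition limsup_function :: "'a list set \<Rightarrow> ((nat \<Rightarrow> 'a) \<Rightarrow> real) \<Rightarrow> bool" where
  "limsup_function T f \<longleftrightarrow>
     (\<exists>u :: 'a list \<Rightarrow> real. \<forall>x\<in>branches T.
        ereal (f x) = limsup (\<lambda>t. ereal (u (map x [0..<Suc t]))))"

end

theory Submission
  imports Defs
begin

text \<open>
  Call a family of predicates \<open>R i r s\<close> on finite sequences (level \<open>i\<close>, threshold \<open>r\<close>) a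
  witness representation of \<open>f\<close> if it is antitone in \<open>r\<close>, stable under extending prefixes of
  a branch, and \<open>r < f x\<close> implies that every level is witnessed by some prefix of \<open>x\<close> while
  \<open>f x < c\<close> implies that some level is never witnessed at \<open>c\<close>. Every such \<open>f\<close> is a limsup
  function: enumerate the rationals as \<open>q\<^sub>j\<close>, let the depth of \<open>s\<close> for \<open>q\<close> be the number of
  consecutive levels \<open>0, 1, \<dots>\<close> witnessed by \<open>s\<close> at \<open>q\<close>, and let \<open>w s\<close> be the largest \<open>q\<^sub>j\<close>
  whose depth increases at the last step of \<open>s\<close> to a value at least \<open>j\<close>. If \<open>q\<^sub>j < f x\<close> the
  depth is unbounded along \<open>x\<close>, so \<open>w \<ge> q\<^sub>j\<close> infinitely often; if \<open>f x < c\<close> then for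
  \<open>q\<^sub>j > c\<close> the depth stays below a fixed bound, which excludes all large \<open>j\<close> and makes the
  finitely many remaining depths eventually constant, so eventually \<open>w \<le> c\<close>.

  If \<open>f\<close> and \<open>g\<close> are limsups of \<open>u\<close> and \<open>v\<close> and \<open>\<phi>\<close> is continuous and nondecreasing in
  both arguments, then "some \<open>m, m' \<ge> i\<close> with \<open>r < \<phi> (u\<^sub>m) (v\<^sub>m\<^sub>')\<close>" is a witness
  representation of \<open>\<phi> (f x) (g x)\<close>; this covers \<open>+\<close>, \<open>min\<close> and \<open>max\<close>.
\<close>

lemma limsup_frequently_gt:
  assumes "ereal F = limsup (\<lambda>t. ereal (a t))" and "r < F"
  shows "\<exists>m\<ge>i. r < a m"
proof (rule ccontr)
  assume "\<not> (\<exists>m\<ge>i. r < a m)"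
  then have "\<forall>\<^sub>F t in sequentially. ereal (a t) \<le> ereal r"
    unfolding eventually_sequentially by (auto simp: not_less)
  then have "limsup (\<lambda>t. ereal (a t)) \<le> ereal r"
    by (rule Limsup_bounded)
  with assms(2) show False
    by (simp flip: assms(1))
qed

lemma limsup_eventually_lt:
  assumes "ereal F = limsup (\<lambda>t. ereal (a t))" and "F < c"
  shows "\<exists>i. \<forall>m\<ge>i. a m < c"
proof -
  from assms(2) have "limsup (\<lambda>t. ereal (a t)) < ereal c"
    by (simp flip: assms(1))
  from Limsup_lessD[OF this] show ?thesis
    unfolding eventually_sequentially by auto
qed

lemma isCont_gt_at_some_pos:
  fixes h :: "real \<Rightarrow> real"
  assumes "isCont h 0" and "r < h 0"
  shows "\<exists>d>0. r < h d"
proof -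
  have "\<forall>\<^sub>F d in at_right 0. r < h d"
    using assms by (intro order_tendstoD(1)) (auto intro: tendsto_within_subset simp: isCont_def)
  then obtain b where "0 < b" "\<forall>d>0. d < b \<longrightarrow> r < h d"
    by (auto simp: eventually_at_right_field)
  then show ?thesis
    using dense[OF \<open>0 < b\<close>] by blast
qed

subsection \<open>Limsup functions from witness representations\<close>

definition rat_seq :: "nat \<Rightarrow> real" where
  "rat_seq j = of_rat (from_nat j)"

lemma rat_seq_dense: "a < b \<Longrightarrow> \<exists>j. a < rat_seq j \<and> rat_seq j < b"
proof -
  assume "a < b"
  then obtain p where "a < of_rat p" "of_rat p < b"
    using of_rat_dense by blast
  moreover have "from_nat (to_nat p) = p"
    by simp
  ultimately show ?thesis
    unfolding rat_seq_def by metis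
qed

definition witness_depth :: "(nat \<Rightarrow> real \<Rightarrow> 'a list \<Rightarrow> bool) \<Rightarrow> real \<Rightarrow> 'a list \<Rightarrow> nat" where
  "witness_depth R q s = (LEAST i. i = length s \<or> \<not> R i q s)"

definition depth_jump :: "(nat \<Rightarrow> real \<Rightarrow> 'a list \<Rightarrow> bool) \<Rightarrow> nat \<Rightarrow> 'a list \<Rightarrow> bool" where
  "depth_jump R j s \<longleftrightarrow>
     witness_depth R (rat_seq j) (butlast s) < witness_depth R (rat_seq j) s
     \<and> j \<le> witness_depth R (rat_seq j) s"

text \<open>The default \<open>- length s\<close> keeps the maximum well defined and tends to \<open>-\<infinity>\<close>.\<close>
definition jump_value :: "(nat \<Rightarrow> real \<Rightarrow> 'a list \<Rightarrow> bool) \<Rightarrow> 'a list \<Rightarrow> real" where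
  "jump_value R s =
     Max (insert (- real (length s)) (rat_seq ` {j. j \<le> length s \<and> depth_jump R j s}))"

lemma butlast_map_upt_Suc: "butlast (map x [0..<Suc t]) = map x [0..<t]"
  by simp

lemma witness_depth_cases:
  "witness_depth R q s = length s \<or> \<not> R (witness_depth R q s) q s"
  unfolding witness_depth_def by (rule LeastI[where k = "length s"]) simp

lemma witness_depth_le_length: "witness_depth R q s \<le> length s"
  unfolding witness_depth_def by (rule Least_le) simp

lemma witness_depth_le: "\<not> R i q s \<Longrightarrow> witness_depth R q s \<le> i"
  unfolding witness_depth_def by (rule Least_le) simp

lemma witness_depth_ge:
  assumes "\<And>i. i < N \<Longrightarrow> R i q s" and "N \<le> length s"
  shows "N \<le> witness_depth R q s"
  using witness_depth_cases[of R q s] assms by (metis not_le)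

lemma jump_value_ge:
  assumes "depth_jump R j s"
  shows "rat_seq j \<le> jump_value R s"
  unfolding jump_value_def using assms witness_depth_le_length[of R "rat_seq j" s]
  by (intro Max_ge) (auto simp: depth_jump_def)

lemma jump_value_le:
  assumes "- real (length s) \<le> c" and "\<And>j. depth_jump R j s \<Longrightarrow> rat_seq j \<le> c"
  shows "jump_value R s \<le> c"
  unfolding jump_value_def using assms by (subst Max_le_iff) auto

lemma eventually_constant_if_mono_bounded:
  fixes h :: "nat \<Rightarrow> nat"
  assumes "\<And>t. h t \<le> h (Suc t)" and "\<And>t. h t \<le> M"
  shows "\<exists>T. \<forall>t\<ge>T. h t = h T"
proof -
  have fin: "finite (range h)"
    using assms(2) by (intro finite_subset[OF _ finite_atMost[of M]]) auto
  obtain T where T: "h T = Max (range h)"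
    using Max_in[OF fin] by auto
  have "h t = h T" if "T \<le> t" for t
    using lift_Suc_mono_le[of h, OF assms(1) that] T fin by (simp add: antisym)
  then show ?thesis
    by blast
qed

locale witness_repr =
  fixes R :: "nat \<Rightarrow> real \<Rightarrow> 'a list \<Rightarrow> bool"
    and B :: "(nat \<Rightarrow> 'a) set"
    and f :: "(nat \<Rightarrow> 'a) \<Rightarrow> real"
  assumes witness_antimono: "\<And>i r r' s. R i r s \<Longrightarrow> r' \<le> r \<Longrightarrow> R i r' s"
    and witness_prefix_mono:
      "\<And>i r x t t'. x \<in> B \<Longrightarrow> R i r (map x [0..<t]) \<Longrightarrow> t \<le> t' \<Longrightarrow> R i r (map x [0..<t'])"
    and witnessed_below: "\<And>x i r. x \<in> B \<Longrightarrow> r < f x \<Longrightarrow> \<exists>t. R i r (map x [0..<t])"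
    and unwitnessed_above: "\<And>x c. x \<in> B \<Longrightarrow> f x < c \<Longrightarrow> \<exists>i. \<forall>t. \<not> R i c (map x [0..<t])"
begin

lemma witness_depth_Suc_mono:
  assumes "x \<in> B"
  shows "witness_depth R q (map x [0..<t]) \<le> witness_depth R q (map x [0..<Suc t])"
proof (cases "witness_depth R q (map x [0..<Suc t]) = Suc t")
  case True
  then show ?thesis
    using witness_depth_le_length[of R q "map x [0..<t]"] by simp
next
  case False
  let ?k = "witness_depth R q (map x [0..<Suc t])"
  from False have "\<not> R ?k q (map x [0..<Suc t])"
    using witness_depth_cases[of R q "map x [0..<Suc t]"] by simp
  then have "\<not> R ?k q (map x [0..<t])"
    using witness_prefix_mono[OF assms, of ?k q t "Suc t"] by auto
  then show ?thesis
    by (rule witness_depth_le)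
qed

lemma witness_depth_mono:
  assumes "x \<in> B" and "t \<le> t'"
  shows "witness_depth R q (map x [0..<t]) \<le> witness_depth R q (map x [0..<t'])"
  using lift_Suc_mono_le[of "\<lambda>t. witness_depth R q (map x [0..<t])",
      OF witness_depth_Suc_mono[OF assms(1)] assms(2)] .

lemma witness_depth_unbounded:
  assumes "x \<in> B" and "q < f x"
  shows "\<exists>t. N \<le> witness_depth R q (map x [0..<t])"
proof -
  have "\<exists>t. \<forall>i<N. R i q (map x [0..<t])"
  proof (induction N)
    case (Suc N)
    then obtain t where t: "\<forall>i<N. R i q (map x [0..<t])"
      by blast
    obtain t' where t': "R N q (map x [0..<t'])"
      using witnessed_below[OF assms] by blast
    have "\<forall>i<Suc N. R i q (map x [0..<max t t'])"
      using t t' witness_prefix_mono[OF assms(1)]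
    by (metis less_Suc_eq max.cobounded1 max.cobounded2)
    then show ?case
      by blast
  qed simp
  then obtain t where "\<forall>i<N. R i q (map x [0..<t])"
    by blast
  then have "\<forall>i<N. R i q (map x [0..<max t N])"
    using witness_prefix_mono[OF assms(1)] by (meson max.cobounded1)
  then have "N \<le> witness_depth R q (map x [0..<max t N])"
    by (intro witness_depth_ge) auto
  then show ?thesis
    by blast
qed

lemma jump_value_frequently_ge:
  assumes "x \<in> B" and "rat_seq j < f x"
  shows "\<exists>t\<ge>T. rat_seq j \<le> jump_value R (map x [0..<Suc t])"
proof -
  define D where "D t = witness_depth R (rat_seq j) (map x [0..<t])" for t
  define N where "N = max j (Suc (D T))"
  have D_mono: "D t \<le> D t'" if "t \<le> t'" for t t'
    unfolding D_def using witness_depth_mono[OF assms(1) that] .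
  obtain t' where "N \<le> D t'"
    using witness_depth_unbounded[OF assms] unfolding D_def by blast
  define t'' where "t'' = (LEAST t. N \<le> D t)"
  have t'': "N \<le> D t''"
    unfolding t''_def by (rule LeastI) fact
  have before: "D t < N" if "t < t''" for t
    using not_less_Least[OF that[unfolded t''_def]] by simp
  have "T < t''"
    using D_mono[of t'' T] t'' unfolding N_def by linarith
  then obtain t where t: "t'' = Suc t" "T \<le> t"
    by (cases t'') auto
  have "D t < D (Suc t)" "j \<le> D (Suc t)"
    using t'' before[of t] t unfolding N_def by auto
  then have "depth_jump R j (map x [0..<Suc t])"
    unfolding depth_jump_def D_def by (simp only: butlast_map_upt_Suc)
  then show ?thesis
    using jump_value_ge t(2) by blast
qed

lemma jump_value_eventually_le:
  assumes "x \<in> B" and "f x < c"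
  shows "\<forall>\<^sub>F t in sequentially. jump_value R (map x [0..<Suc t]) \<le> c"
proof -
  obtain i0 where i0: "\<And>t. \<not> R i0 ((f x + c) / 2) (map x [0..<t])"
    using unwitnessed_above[OF assms(1)] assms(2) by fastforce
  have bounded: "witness_depth R (rat_seq j) (map x [0..<t]) \<le> i0" if "c < rat_seq j" for j t
    using i0[of t] witness_antimono[of i0 "rat_seq j" _ "(f x + c) / 2"] that assms(2)
    by (intro witness_depth_le) force
  have small_j: "\<forall>\<^sub>F t in sequentially. \<not> (c < rat_seq j \<and> depth_jump R j (map x [0..<Suc t]))"
    for j
  proof (cases "c < rat_seq j")
    case True
    obtain T where T: "\<And>t. T \<le> t \<Longrightarrow>
        witness_depth R (rat_seq j) (map x [0..<t]) = witness_depth R (rat_seq j) (map x [0..<T])"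
      using eventually_constant_if_mono_bounded[of "\<lambda>t. witness_depth R (rat_seq j) (map x [0..<t])"]
        witness_depth_Suc_mono[OF assms(1)] bounded[OF True] by blast
    have "\<not> depth_jump R j (map x [0..<Suc t])" if "T \<le> t" for t
      using T[of t] T[of "Suc t"] that unfolding depth_jump_def
      by (simp only: butlast_map_upt_Suc) simp
    then show ?thesis
      unfolding eventually_sequentially by blast
  qed simp
  have "\<forall>\<^sub>F t in sequentially.
      \<forall>j\<in>{..i0}. \<not> (c < rat_seq j \<and> depth_jump R j (map x [0..<Suc t]))"
    by (intro eventually_ball_finite ballI small_j) simp
  moreover have "\<forall>\<^sub>F t in sequentially. - real (Suc t) \<le> c"
    unfolding eventually_sequentially by (rule exI[of _ "nat \<lceil>- c\<rceil>"]) linarith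
  ultimately show ?thesis
  proof eventually_elim
    case (elim t)
    have "rat_seq j \<le> c" if jump: "depth_jump R j (map x [0..<Suc t])" for j
    proof (rule ccontr)
      assume "\<not> rat_seq j \<le> c"
      then have "j \<le> i0"
        using jump bounded[of j "Suc t"] unfolding depth_jump_def by simp
      with elim(1) jump \<open>\<not> rat_seq j \<le> c\<close> show False
        by auto
    qed
    with elim(2) show ?case
      by (intro jump_value_le) auto
  qed
qed

theorem limsup_jump_value:
  assumes "x \<in> B"
  shows "ereal (f x) = limsup (\<lambda>t. ereal (jump_value R (map x [0..<Suc t])))"
    (is "_ = ?l")
proof (rule antisym)
  show "?l \<le> ereal (f x)"
    unfolding Limsup_le_iff
  proof (intro allI impI)
    fix y
    assume "ereal (f x) < y"
    then obtain c where c: "ereal (f x) < ereal c" "ereal c < y"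
      using ereal_dense2 by blast
    from jump_value_eventually_le[OF assms c(1)[unfolded less_ereal.simps]]
    show "\<forall>\<^sub>F t in sequentially. ereal (jump_value R (map x [0..<Suc t])) < y"
    proof eventually_elim
      case (elim t)
      then have "ereal (jump_value R (map x [0..<Suc t])) \<le> ereal c"
        by (simp del: upt_Suc)
      then show ?case
        using c(2) by (rule le_less_trans)
    qed
  qed
  show "ereal (f x) \<le> ?l"
  proof (rule ccontr)
    assume "\<not> ereal (f x) \<le> ?l"
    then have "?l < ereal (f x)"
      by (simp only: not_le)
    then obtain r where r: "?l < ereal r" "ereal r < ereal (f x)"
      using ereal_dense2 by blast
    obtain j where j: "r < rat_seq j" "rat_seq j < f x"
      using rat_seq_dense r(2)[unfolded less_ereal.simps] by blast
    have "?l < ereal (rat_seq j)"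
      using r(1) j(1)[folded less_ereal.simps] by (rule less_trans)
    from Limsup_lessD[OF this] obtain T where
      T: "\<And>t. T \<le> t \<Longrightarrow> jump_value R (map x [0..<Suc t]) < rat_seq j"
      unfolding eventually_sequentially by (auto simp del: upt_Suc)
    from jump_value_frequently_ge[OF assms j(2)] obtain t
      where "T \<le> t" "rat_seq j \<le> jump_value R (map x [0..<Suc t])"
      by blast
    with T show False
      by (meson not_le)
  qed
qed

end

lemma limsup_function_if_witness_repr:
  assumes "witness_repr R (branches T) f"
  shows "limsup_function T f"
  unfolding limsup_function_def using witness_repr.limsup_jump_value[OF assms] by blast

subsection \<open>Monotone continuous combinations\<close>

definition pair_witness ::
    "(real \<Rightarrow> real \<Rightarrow> real) \<Rightarrow> ('a list \<Rightarrow> real) \<Rightarrow> ('a list \<Rightarrow> real) \<Rightarrow>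
      nat \<Rightarrow> real \<Rightarrow> 'a list \<Rightarrow> bool"
  where
  "pair_witness \<phi> u v i r s \<longleftrightarrow> (\<exists>m m'. i \<le> m \<and> m < length s \<and> i \<le> m' \<and> m' < length s
     \<and> r < \<phi> (u (take (Suc m) s)) (v (take (Suc m') s)))"

lemma pair_witness_map_upt:
  "pair_witness \<phi> u v i r (map x [0..<t]) \<longleftrightarrow> (\<exists>m m'. i \<le> m \<and> m < t \<and> i \<le> m' \<and> m' < t
     \<and> r < \<phi> (u (map x [0..<Suc m])) (v (map x [0..<Suc m'])))"
  unfolding pair_witness_def by (simp del: upt_Suc add: take_map cong: conj_cong)

lemma witness_repr_pair_witness:
  fixes \<phi> :: "real \<Rightarrow> real \<Rightarrow> real"
  assumes mono: "\<And>a b a' b'. a \<le> a' \<Longrightarrow> b \<le> b' \<Longrightarrow> \<phi> a b \<le> \<phi> a' b'"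
    and cont: "continuous_on UNIV (\<lambda>p. \<phi> (fst p) (snd p))"
    and f: "\<And>x. x \<in> B \<Longrightarrow> ereal (f x) = limsup (\<lambda>t. ereal (u (map x [0..<Suc t])))"
    and g: "\<And>x. x \<in> B \<Longrightarrow> ereal (g x) = limsup (\<lambda>t. ereal (v (map x [0..<Suc t])))"
  shows "witness_repr (pair_witness \<phi> u v) B (\<lambda>x. \<phi> (f x) (g x))"
proof
  have isCont_diag: "isCont (\<lambda>d. \<phi> (a + e * d) (b + e * d)) 0" for a b e :: real
  proof -
    have "isCont (\<lambda>p. \<phi> (fst p) (snd p)) (a, b)"
      using cont by (simp add: continuous_on_eq_continuous_at)
    moreover have "isCont (\<lambda>d. (a + e * d, b + e * d)) 0"
      by (intro continuous_intros)
    ultimately show ?thesis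
      using isCont_o2[where f = "\<lambda>d. (a + e * d, b + e * d)" and g = "\<lambda>p. \<phi> (fst p) (snd p)"]
      by simp
  qed
  show "pair_witness \<phi> u v i r' s" if "pair_witness \<phi> u v i r s" "r' \<le> r" for i r r' s
    using that unfolding pair_witness_def by force
  show "pair_witness \<phi> u v i r (map x [0..<t'])"
    if "pair_witness \<phi> u v i r (map x [0..<t])" "t \<le> t'" for i r x t t'
    using that unfolding pair_witness_map_upt by (meson order_less_le_trans)
  show "\<exists>t. pair_witness \<phi> u v i r (map x [0..<t])"
    if x: "x \<in> B" and r: "r < \<phi> (f x) (g x)" for x i r
  proof -
    obtain d where d: "0 < d" "r < \<phi> (f x - d) (g x - d)"
      using isCont_gt_at_some_pos[OF isCont_diag[where a = "f x" and b = "g x" and e = "-1"], of r] r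
      by auto
    obtain m where m: "i \<le> m" "f x - d < u (map x [0..<Suc m])"
      using limsup_frequently_gt[OF f[OF x], of "f x - d" i] d(1) by auto
    obtain m' where m': "i \<le> m'" "g x - d < v (map x [0..<Suc m'])"
      using limsup_frequently_gt[OF g[OF x], of "g x - d" i] d(1) by auto
    have "r < \<phi> (u (map x [0..<Suc m])) (v (map x [0..<Suc m']))"
      using d(2) mono[OF less_imp_le[OF m(2)] less_imp_le[OF m'(2)]] by linarith
    then have "pair_witness \<phi> u v i r (map x [0..<Suc (max m m')])"
      unfolding pair_witness_map_upt using m(1) m'(1)
      by (meson less_Suc_eq_le max.cobounded1 max.cobounded2)
    then show ?thesis
      by blast
  qed
  show "\<exists>i. \<forall>t. \<not> pair_witness \<phi> u v i c (map x [0..<t])"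
    if x: "x \<in> B" and c: "\<phi> (f x) (g x) < c" for x c
  proof -
    have "isCont (\<lambda>d. - \<phi> (f x + 1 * d) (g x + 1 * d)) 0"
      using isCont_diag[where a = "f x" and b = "g x" and e = 1] by (rule isCont_minus)
    from isCont_gt_at_some_pos[OF this, of "- c"] c
    obtain d where d: "0 < d" "\<phi> (f x + d) (g x + d) < c"
      by auto
    obtain i1 where i1: "\<forall>m\<ge>i1. u (map x [0..<Suc m]) < f x + d"
      using limsup_eventually_lt[OF f[OF x], of "f x + d"] d(1) by auto
    obtain i2 where i2: "\<forall>m\<ge>i2. v (map x [0..<Suc m]) < g x + d"
      using limsup_eventually_lt[OF g[OF x], of "g x + d"] d(1) by auto
    have "\<not> pair_witness \<phi> u v (max i1 i2) c (map x [0..<t])" for t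
    proof
      assume "pair_witness \<phi> u v (max i1 i2) c (map x [0..<t])"
      then obtain m m' where mm: "max i1 i2 \<le> m" "max i1 i2 \<le> m'"
          "c < \<phi> (u (map x [0..<Suc m])) (v (map x [0..<Suc m']))"
        unfolding pair_witness_map_upt by blast
      have "\<phi> (u (map x [0..<Suc m])) (v (map x [0..<Suc m'])) \<le> \<phi> (f x + d) (g x + d)"
        using i1 i2 mm(1,2) by (intro mono) (simp_all del: upt_Suc add: less_imp_le)
      with mm(3) d(2) show False
        by linarith
    qed
    then show ?thesis
      by blast
  qed
qed

lemma limsup_function_combine_mono_continuous:
  fixes \<phi> :: "real \<Rightarrow> real \<Rightarrow> real"
  assumes "\<And>a b a' b'. a \<le> a' \<Longrightarrow> b \<le> b' \<Longrightarrow> \<phi> a b \<le> \<phi> a' b'"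
    and "continuous_on UNIV (\<lambda>p. \<phi> (fst p) (snd p))"
    and "limsup_function T f" and "limsup_function T g"
  shows "limsup_function T (\<lambda>x. \<phi> (f x) (g x))"
proof -
  obtain u where u: "\<forall>x\<in>branches T. ereal (f x) = limsup (\<lambda>t. ereal (u (map x [0..<Suc t])))"
    using assms(3) unfolding limsup_function_def by blast
  obtain v where v: "\<forall>x\<in>branches T. ereal (g x) = limsup (\<lambda>t. ereal (v (map x [0..<Suc t])))"
    using assms(4) unfolding limsup_function_def by blast
  show ?thesis
    by (rule limsup_function_if_witness_repr,
        rule witness_repr_pair_witness[OF assms(1,2), where u = u and v = v])
      (use u v in blast)+
qed

theorem mainTheorem2:
  fixes A :: "'a set" and T :: "'a list set" and f g :: "(nat \<Rightarrow> 'a) \<Rightarrow> real"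
  assumes "A \<noteq> {}" and "countable A" and "pruned_tree A T"
    and "limsup_function T f" and "limsup_function T g"
  shows "limsup_function T (\<lambda>x. f x + g x)
     \<and> limsup_function T (\<lambda>x. min (f x) (g x))
     \<and> limsup_function T (\<lambda>x. max (f x) (g x))"
proof (intro conjI)
  show "limsup_function T (\<lambda>x. f x + g x)"
    by (rule limsup_function_combine_mono_continuous[OF _ _ assms(4,5)])
      (auto intro: add_mono, intro continuous_intros)
  show "limsup_function T (\<lambda>x. min (f x) (g x))"
    by (rule limsup_function_combine_mono_continuous[OF _ _ assms(4,5)])
      (auto intro: min.mono, intro continuous_intros)
  show "limsup_function T (\<lambda>x. max (f x) (g x))"
    by (rule limsup_function_combine_mono_continuous[OF _ _ assms(4,5)])
      (auto intro: max.mono, intro continuous_intros)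
qed

end
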